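(* Let $d\ge2$ and let $\{S_i\}_{i\in\mathcal I}$ be a finite family of contracting similarities of $\mathbb{R}^d$ with ratios $c_i$ which all share a common fixed point (so that the attractor $F_\emptyset$ is a singleton). Let $s$ be the similarity dimension. If $C\subset\mathbb{R}^d$ is a singleton (or any compact set of box dimension $0$), then the inhomogeneous attractor $F_C$ satisfies \[ \overline{\dim}_{\mathrm B}F_C\le\frac{s}{1+\frac{s}{d-1}}=\frac{d-1}{1+\frac{d-1}{s}}<d-1. \]
   Context: $F_C$ is the unique non-empty compact set with $F_C=\bigcup_iS_i(F_C)\cup C$; $F_\emptyset$ the unique non-empty compact set with $F_\emptyset=\bigcup_iS_i(F_\emptyset)$. The similarity dimension $s$ is the unique $s\ge0$ with $\sum_ic_i^s=1$. $\overline{\dim}_{\mathrm B}$ is upper box dimension. *)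

theory Defs
  imports "HOL-Analysis.Analysis"
begin

definition similarity_with_ratio :: "real \<Rightarrow> ('a::metric_space \<Rightarrow> 'a) \<Rightarrow> bool" where
  "similarity_with_ratio c f \<longleftrightarrow> (\<forall>x y. dist (f x) (f y) = c * dist x y)"

definition covering_number :: "real \<Rightarrow> 'a::metric_space set \<Rightarrow> nat" where
  "covering_number \<delta> F = (LEAST n. \<exists>A. finite A \<and> card A = n \<and> F \<subseteq> (\<Union>x\<in>A. cball x \<delta>))"

definition upper_box_dim :: "'a::metric_space set \<Rightarrow> ereal" where
  "upper_box_dim F = Limsup (at_right 0)
      (\<lambda>\<delta>. ereal (ln (real (covering_number \<delta> F)) / (- ln \<delta>)))"

end

theory Submission
  imports Defs "HOL-Real_Asymp.Real_Asymp"
begin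

text \<open>Unfolding the equation F = (\<Union>i. S i ` F) \<union> C about log(1/\<delta>) times covers F by the images
  S_w(C) for all shorter words w, plus a \<delta>-ball about the common fixed point p. Fix a threshold
  \<rho> = \<delta>^\<beta>. Since the s-th powers of the ratios of the words of a given length sum to 1, at most
  \<rho>^(-s) of them have ratio c_w \<ge> \<rho>, and each of their images needs only N_\<delta>(C) = \<delta>^(-o(1))
  balls. A word with c_w < \<rho> maps a \<delta>-ball about a into the shell of width \<delta> and radius
  c_w |a - p| about p inside B(p, \<rho> R), which needs about (\<rho>/\<delta>)^(d-1) balls; since c_w only
  depends on the letter counts of w, only polynomially many shells occur. Balancing
  s \<beta> = (1 - \<beta>)(d - 1) gives the exponent s (d - 1) / (s + d - 1).\<close>

definition coverable :: "real \<Rightarrow> 'a::metric_space set \<Rightarrow> real \<Rightarrow> bool" where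
  "coverable \<delta> X B \<longleftrightarrow> (\<exists>A. finite A \<and> real (card A) \<le> B \<and> X \<subseteq> (\<Union>x\<in>A. cball x \<delta>))"

lemma covering_number_le:
  assumes "coverable \<delta> X B"
  shows "real (covering_number \<delta> X) \<le> B"
proof -
  obtain A where A: "finite A" "real (card A) \<le> B" "X \<subseteq> (\<Union>x\<in>A. cball x \<delta>)"
    using assms unfolding coverable_def by blast
  have "covering_number \<delta> X \<le> card A"
    unfolding covering_number_def by (rule Least_le) (use A in blast)
  with A(2) show ?thesis by linarith
qed

lemma coverable_nonneg: "coverable \<delta> X B \<Longrightarrow> 0 \<le> B"
  unfolding coverable_def by force

lemma coverable_covering_number:
  assumes "compact X" "0 < \<delta>"
  shows "coverable \<delta> X (covering_number \<delta> X)"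
proof -
  obtain A where "A \<subseteq> X" "finite A" "X \<subseteq> (\<Union>x\<in>A. ball x \<delta>)"
    using compactE_image[OF assms(1), of X "\<lambda>x. ball x \<delta>"] assms(2) by force
  then have "\<exists>n A. finite A \<and> card A = n \<and> X \<subseteq> (\<Union>x\<in>A. cball x \<delta>)"
    by (intro exI[of _ "card A"] exI[of _ A]) (auto dest!: subsetD)
  from LeastI_ex[OF this] obtain A where
    "finite A" "card A = covering_number \<delta> X" "X \<subseteq> (\<Union>x\<in>A. cball x \<delta>)"
    unfolding covering_number_def by blast
  then show ?thesis unfolding coverable_def by auto
qed

lemma coverable_mono: "coverable \<delta> X B \<Longrightarrow> Y \<subseteq> X \<Longrightarrow> B \<le> B' \<Longrightarrow> coverable \<delta> Y B'"
  unfolding coverable_def by (meson order_trans)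

lemma coverable_Un:
  assumes "coverable \<delta> X B" "coverable \<delta> Y B'"
  shows "coverable \<delta> (X \<union> Y) (B + B')"
proof -
  obtain A A' where A: "finite A" "real (card A) \<le> B" "X \<subseteq> (\<Union>x\<in>A. cball x \<delta>)"
    and A': "finite A'" "real (card A') \<le> B'" "Y \<subseteq> (\<Union>x\<in>A'. cball x \<delta>)"
    using assms unfolding coverable_def by blast
  have "real (card (A \<union> A')) \<le> B + B'"
    using card_Un_le[of A A'] A A' by linarith
  with A A' show ?thesis
    unfolding coverable_def by (intro exI[of _ "A \<union> A'"]) auto
qed

lemma coverable_UN:
  assumes "finite J" "\<And>j. j \<in> J \<Longrightarrow> coverable \<delta> (X j) (B j)"
  shows "coverable \<delta> (\<Union>j\<in>J. X j) (\<Sum>j\<in>J. B j)"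
  using assms
proof (induction J rule: finite_induct)
  case empty
  then show ?case unfolding coverable_def by (intro exI[of _ "{}"]) auto
next
  case (insert j J)
  then show ?case using coverable_Un[of \<delta> "X j" "B j"] by auto
qed

lemma coverable_image:
  assumes "coverable \<delta> X B" "\<And>x y. dist (f x) (f y) \<le> dist x y"
  shows "coverable \<delta> (f ` X) B"
proof -
  obtain A where A: "finite A" "real (card A) \<le> B" "X \<subseteq> (\<Union>x\<in>A. cball x \<delta>)"
    using assms(1) unfolding coverable_def by blast
  have "f ` X \<subseteq> (\<Union>x\<in>f ` A. cball x \<delta>)"
  proof
    fix y assume "y \<in> f ` X"
    then obtain x a where "y = f x" "a \<in> A" "dist a x \<le> \<delta>" using A(3) by fastforce
    then show "y \<in> (\<Union>x\<in>f ` A. cball x \<delta>)" using assms(2)[of a x] by force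
  qed
  moreover have "real (card (f ` A)) \<le> B" using A(2) card_image_le[OF A(1), of f] by linarith
  ultimately show ?thesis unfolding coverable_def using A(1) by blast
qed

lemma coverable_cball: "coverable \<delta> (cball p \<delta>) 1"
  unfolding coverable_def by (intro exI[of _ "{p}"]) auto

definition separated :: "real \<Rightarrow> 'a::metric_space set \<Rightarrow> bool" where
  "separated \<delta> Y \<longleftrightarrow> (\<forall>y\<in>Y. \<forall>z\<in>Y. y \<noteq> z \<longrightarrow> \<delta> < dist y z)"

text \<open>A maximal \<open>\<delta>\<close>-separated subset is a \<open>\<delta>\<close>-net.\<close>
lemma coverable_if_separated_card_le:
  fixes B :: nat
  assumes "0 \<le> \<delta>" and bound: "\<And>Y. finite Y \<Longrightarrow> Y \<subseteq> X \<Longrightarrow> separated \<delta> Y \<Longrightarrow> card Y \<le> B"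
  shows "coverable \<delta> X B"
proof -
  let ?P = "\<lambda>Y. finite Y \<and> Y \<subseteq> X \<and> separated \<delta> Y"
  have "?P {}" unfolding separated_def by auto
  moreover have "\<forall>Y. ?P Y \<longrightarrow> card Y < Suc B" using bound by (simp add: less_Suc_eq_le)
  ultimately obtain Y where Y: "?P Y" and maximal: "\<forall>Z. ?P Z \<longrightarrow> card Z \<le> card Y"
    using ex_has_greatest_nat[of ?P "{}" card "Suc B"] by blast
  have "X \<subseteq> (\<Union>y\<in>Y. cball y \<delta>)"
  proof
    fix x assume x: "x \<in> X"
    show "x \<in> (\<Union>y\<in>Y. cball y \<delta>)"
    proof (rule ccontr)
      assume "x \<notin> (\<Union>y\<in>Y. cball y \<delta>)"
      then have far: "\<forall>y\<in>Y. \<delta> < dist y x" by (auto simp: not_le)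
      with \<open>0 \<le> \<delta>\<close> have "x \<notin> Y" by force
      have "?P (insert x Y)"
        using Y x far unfolding separated_def by (auto simp: dist_commute)
      then have "card (insert x Y) \<le> card Y" using maximal by blast
      with \<open>x \<notin> Y\<close> Y show False by simp
    qed
  qed
  moreover have "card Y \<le> B" using bound Y by blast
  ultimately show ?thesis using Y unfolding coverable_def by auto
qed

lemma power_diff_le_mult:
  fixes x y :: real
  assumes "0 \<le> y" "y \<le> x"
  shows "x ^ n - y ^ n \<le> real n * x ^ (n - 1) * (x - y)"
proof -
  have "(\<Sum>i<n. y ^ (n - Suc i) * x ^ i) \<le> (\<Sum>i<n. x ^ (n - 1))"
  proof (rule sum_mono)
    fix i assume i: "i \<in> {..<n}"
    have "y ^ (n - Suc i) * x ^ i \<le> x ^ (n - Suc i) * x ^ i"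
      using assms by (intro mult_right_mono power_mono) auto
    also have "\<dots> = x ^ (n - 1)" using i by (simp flip: power_add)
    finally show "y ^ (n - Suc i) * x ^ i \<le> x ^ (n - 1)" .
  qed
  then have "(x - y) * (\<Sum>i<n. y ^ (n - Suc i) * x ^ i) \<le> (x - y) * (\<Sum>i<n. x ^ (n - 1))"
    using assms by (intro mult_left_mono) auto
  then show ?thesis by (simp add: power_diff_sumr2 algebra_simps)
qed

lemma measure_annulus_le:
  fixes p :: "'a::euclidean_space"
  assumes "0 \<le> r" "r \<le> R"
  shows "measure lebesgue (cball p R - ball p r)
    \<le> unit_ball_vol DIM('a) * DIM('a) * R ^ (DIM('a) - 1) * (R - r)"
proof -
  have "measure lebesgue (cball p R - ball p r)
      = measure lebesgue (cball p R) - measure lebesgue (ball p r)"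
    by (rule measurable_measure_Diff) (use assms in auto)
  also have "\<dots> = unit_ball_vol DIM('a) * (R ^ DIM('a) - r ^ DIM('a))"
    using assms by (simp add: content_ball content_cball algebra_simps)
  also have "\<dots> \<le> unit_ball_vol DIM('a) * (DIM('a) * R ^ (DIM('a) - 1) * (R - r))"
    using power_diff_le_mult[OF assms] by (intro mult_left_mono) auto
  finally show ?thesis by (simp add: algebra_simps)
qed

lemma card_separated_mult_ball_volume_le:
  fixes Y U :: "'a::euclidean_space set"
  assumes "finite Y" "separated \<delta> Y" "0 < \<delta>" "U \<in> fmeasurable lebesgue"
    and inside: "\<And>y. y \<in> Y \<Longrightarrow> ball y (\<delta>/2) \<subseteq> U"
  shows "real (card Y) * (unit_ball_vol DIM('a) * (\<delta>/2) ^ DIM('a)) \<le> measure lebesgue U"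
proof -
  have "pairwise (\<lambda>y z. disjnt (ball y (\<delta>/2)) (ball z (\<delta>/2))) Y"
    unfolding pairwise_def disjnt_def
  proof (intro ballI impI)
    fix y z assume "y \<in> Y" "z \<in> Y" "y \<noteq> z"
    then have "\<delta> < dist y z" using assms(2) unfolding separated_def by blast
    show "ball y (\<delta>/2) \<inter> ball z (\<delta>/2) = {}"
    proof (rule ccontr)
      assume "ball y (\<delta>/2) \<inter> ball z (\<delta>/2) \<noteq> {}"
      then obtain u where "dist y u < \<delta>/2" "dist z u < \<delta>/2" by auto
      with \<open>\<delta> < dist y z\<close> show False
        using dist_triangle3[of y z u] by (simp add: dist_commute)
    qed
  qed
  then have "measure lebesgue (\<Union>y\<in>Y. ball y (\<delta>/2)) = (\<Sum>y\<in>Y. measure lebesgue (ball y (\<delta>/2)))"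
    by (intro measure_UNION') (use assms(1) in auto)
  also have "\<dots> = real (card Y) * (unit_ball_vol DIM('a) * (\<delta>/2) ^ DIM('a))"
    using assms(3) by (simp add: content_ball)
  finally have "measure lebesgue (\<Union>y\<in>Y. ball y (\<delta>/2)) = \<dots>" .
  moreover have "measure lebesgue (\<Union>y\<in>Y. ball y (\<delta>/2)) \<le> measure lebesgue U"
    by (rule measure_mono_fmeasurable) (use inside assms(1,4) in auto)
  ultimately show ?thesis by simp
qed

definition shell :: "'a::metric_space \<Rightarrow> real \<Rightarrow> real \<Rightarrow> real \<Rightarrow> 'a set" where
  "shell p r \<delta> L = {y. \<bar>dist y p - r\<bar> \<le> \<delta> \<and> dist y p \<le> L}"

lemma card_separated_in_shell_le:
  fixes p :: "'a::euclidean_space"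
  assumes "0 < \<delta>" "0 \<le> L" "finite Y" "Y \<subseteq> shell p r \<delta> L" "separated \<delta> Y"
  shows "real (card Y) \<le> 3 * DIM('a) * 2 ^ DIM('a) * (L / \<delta> + 1) ^ (DIM('a) - 1)"
proof (cases "Y = {}")
  case True
  with assms(1,2) show ?thesis by simp
next
  case False
  then obtain y0 where "y0 \<in> Y" by blast
  define n where "n = DIM('a)"
  define w where "w = unit_ball_vol (real n)"
  define r_in where "r_in = max 0 (r - 3 * \<delta> / 2)"
  define r_out where "r_out = min (r + \<delta>) L + \<delta> / 2"
  have in_shell: "\<bar>dist y p - r\<bar> \<le> \<delta>" "dist y p \<le> L" if "y \<in> Y" for y
    using that assms(4) unfolding shell_def by auto
  have radii: "0 \<le> r_in" "r_in \<le> r_out" "r_out \<le> L + \<delta>" "r_out - r_in \<le> 3 * \<delta>"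
    using in_shell[OF \<open>y0 \<in> Y\<close>] zero_le_dist[of y0 p] assms(1)
    unfolding r_in_def r_out_def by linarith+
  have balls_inside: "ball y (\<delta>/2) \<subseteq> cball p r_out - ball p r_in" if "y \<in> Y" for y
  proof
    fix z assume "z \<in> ball y (\<delta>/2)"
    then have "dist z p < \<delta>/2 + dist y p" "dist y p - \<delta>/2 < dist z p"
      using dist_triangle[of z p y] dist_triangle[of y p z] by (auto simp: dist_commute)
    with in_shell[OF that] zero_le_dist[of z p] have "dist z p \<le> r_out" "r_in \<le> dist z p"
      unfolding r_in_def r_out_def by linarith+
    then show "z \<in> cball p r_out - ball p r_in" by (simp add: dist_commute)
  qed
  define k where "k = n - 1"
  have n_Suc: "n = Suc k" unfolding k_def n_def using DIM_positive by simp
  have w_pos: "0 < w" unfolding w_def by simp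
  have "real (card Y) * (w * (\<delta>/2) ^ n) \<le> measure lebesgue (cball p r_out - ball p r_in)"
    unfolding w_def n_def
    by (rule card_separated_mult_ball_volume_le) (use assms balls_inside in auto)
  also have "\<dots> \<le> w * n * r_out ^ k * (r_out - r_in)"
    using measure_annulus_le[of r_in r_out p] radii unfolding w_def k_def n_def by simp
  also have "\<dots> \<le> w * n * (L + \<delta>) ^ k * (3 * \<delta>)"
    using radii w_pos by (intro mult_mono power_mono) auto
  also have "\<dots> = (3 * n * 2 ^ n * (L / \<delta> + 1) ^ k) * (w * (\<delta>/2) ^ n)"
  proof -
    have "(L + \<delta>) ^ k = \<delta> ^ k * (L / \<delta> + 1) ^ k"
      using assms(1) by (simp add: field_simps flip: power_mult_distrib)
    then show ?thesis using assms(1) by (simp add: n_Suc field_simps)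
  qed
  finally show ?thesis
    using w_pos assms(1) unfolding k_def n_def by (simp add: mult_le_cancel_right)
qed

lemma coverable_shell:
  fixes p :: "'a::euclidean_space"
  assumes "0 < \<delta>" "0 \<le> L"
  shows "coverable \<delta> (shell p r \<delta> L) (3 * DIM('a) * 2 ^ DIM('a) * (L / \<delta> + 1) ^ (DIM('a) - 1))"
proof -
  define B where "B = 3 * DIM('a) * 2 ^ DIM('a) * (L / \<delta> + 1) ^ (DIM('a) - 1)"
  have "coverable \<delta> (shell p r \<delta> L) (nat \<lfloor>B\<rfloor>)"
  proof (rule coverable_if_separated_card_le)
    fix Y assume "finite Y" "Y \<subseteq> shell p r \<delta> L" "separated \<delta> Y"
    from card_separated_in_shell_le[OF assms this] show "card Y \<le> nat \<lfloor>B\<rfloor>"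
      unfolding B_def by linarith
  qed (use assms in simp)
  moreover have "real (nat \<lfloor>B\<rfloor>) \<le> B" unfolding B_def using assms by simp
  ultimately show ?thesis unfolding B_def by (rule coverable_mono[OF _ order_refl])
qed

definition words :: "'i set \<Rightarrow> nat \<Rightarrow> 'i list set" where
  "words I n = {w. set w \<subseteq> I \<and> length w = n}"

definition word_map :: "('i \<Rightarrow> 'a \<Rightarrow> 'a) \<Rightarrow> 'i list \<Rightarrow> 'a \<Rightarrow> 'a" where
  "word_map S w = foldr (\<lambda>i f. S i \<circ> f) w id"

definition word_ratio :: "('i \<Rightarrow> real) \<Rightarrow> 'i list \<Rightarrow> real" where
  "word_ratio c w = prod_list (map c w)"

lemma word_map_Nil [simp]: "word_map S [] = id"
  by (simp add: word_map_def)

lemma word_map_Cons [simp]: "word_map S (i # w) = S i \<circ> word_map S w"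
  by (simp add: word_map_def)

lemma word_map_append_single: "word_map S (w @ [i]) = word_map S w \<circ> S i"
  by (induction w) auto

lemma word_ratio_Nil [simp]: "word_ratio c [] = 1"
  by (simp add: word_ratio_def)

lemma word_ratio_Cons [simp]: "word_ratio c (i # w) = c i * word_ratio c w"
  by (simp add: word_ratio_def)

lemma words_0: "words I 0 = {[]}"
  unfolding words_def by auto

lemma words_Suc: "words I (Suc n) = (\<lambda>(i, w). i # w) ` (I \<times> words I n)"
proof
  show "words I (Suc n) \<subseteq> (\<lambda>(i, w). i # w) ` (I \<times> words I n)"
  proof
    fix w assume "w \<in> words I (Suc n)"
    then obtain i v where "w = i # v" "i \<in> I" "v \<in> words I n"
      unfolding words_def by (cases w) auto
    then show "w \<in> (\<lambda>(i, w). i # w) ` (I \<times> words I n)" by force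
  qed
qed (auto simp: words_def)

lemma finite_words: "finite I \<Longrightarrow> finite (words I n)"
  unfolding words_def by (rule finite_lists_length_eq)

lemma dist_word_map:
  assumes "\<And>i. i \<in> I \<Longrightarrow> similarity_with_ratio (c i) (S i)" "set w \<subseteq> I"
  shows "dist (word_map S w x) (word_map S w y) = word_ratio c w * dist x y"
  using assms(2)
proof (induction w arbitrary: x y)
  case (Cons i w)
  then have "similarity_with_ratio (c i) (S i)" using assms(1) by auto
  with Cons show ?case by (simp add: similarity_with_ratio_def)
qed simp

lemma word_map_fixpoint: "(\<And>i. i \<in> I \<Longrightarrow> S i p = p) \<Longrightarrow> set w \<subseteq> I \<Longrightarrow> word_map S w p = p"
  by (induction w) auto

lemma word_ratio_pos: "(\<And>i. i \<in> I \<Longrightarrow> 0 < c i) \<Longrightarrow> set w \<subseteq> I \<Longrightarrow> 0 < word_ratio c w"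
  by (induction w) auto

lemma word_ratio_le_power:
  assumes "\<And>i. i \<in> I \<Longrightarrow> 0 < c i \<and> c i \<le> q" "set w \<subseteq> I"
  shows "word_ratio c w \<le> q ^ length w"
  using assms(2)
proof (induction w)
  case (Cons i w)
  then have "c i \<le> q" "0 \<le> c i" "0 \<le> word_ratio c w"
    using assms(1) word_ratio_pos[of I c w] by force+
  with Cons show ?case by (auto intro: mult_mono)
qed simp

lemma word_ratio_eq_prod_count:
  assumes "finite I" "set w \<subseteq> I"
  shows "word_ratio c w = (\<Prod>i\<in>I. c i ^ count_list w i)"
  using assms(2)
proof (induction w)
  case (Cons j w)
  have "(\<Prod>i\<in>I. c i ^ count_list (j # w) i)
      = (\<Prod>i\<in>I. (if i = j then c i else 1) * c i ^ count_list w i)"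
    by (intro prod.cong) auto
  also have "\<dots> = c j * (\<Prod>i\<in>I. c i ^ count_list w i)"
    using Cons.prems assms(1) by (simp add: prod.distrib prod.delta)
  finally show ?case using Cons by simp
qed simp

lemma card_word_ratios_le:
  assumes "finite I"
  shows "card (word_ratio c ` (\<Union>k<n. words I k)) \<le> n ^ card I"
proof -
  let ?exponents = "PiE I (\<lambda>_. {..<n})"
  have "word_ratio c ` (\<Union>k<n. words I k) \<subseteq> (\<lambda>m. \<Prod>i\<in>I. c i ^ m i) ` ?exponents"
  proof
    fix v assume "v \<in> word_ratio c ` (\<Union>k<n. words I k)"
    then obtain w where w: "set w \<subseteq> I" "length w < n" and v: "v = word_ratio c w"
      unfolding words_def by blast
    have "restrict (count_list w) I \<in> ?exponents"
      using w by (auto intro: le_less_trans[OF count_le_length])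
    moreover have "v = (\<Prod>i\<in>I. c i ^ restrict (count_list w) I i)"
      using v word_ratio_eq_prod_count[OF assms w(1)] by simp
    ultimately show "v \<in> (\<lambda>m. \<Prod>i\<in>I. c i ^ m i) ` ?exponents" by blast
  qed
  then have "card (word_ratio c ` (\<Union>k<n. words I k)) \<le> card ((\<lambda>m. \<Prod>i\<in>I. c i ^ m i) ` ?exponents)"
    using assms by (intro card_mono) (auto intro: finite_PiE)
  also have "\<dots> \<le> card ?exponents"
    by (rule card_image_le) (use assms in \<open>auto intro: finite_PiE\<close>)
  also have "\<dots> = n ^ card I" using assms by (simp add: card_PiE)
  finally show ?thesis .
qed

lemma sum_words_ratio_powr:
  assumes "finite I" "\<And>i. i \<in> I \<Longrightarrow> 0 < c i" "(\<Sum>i\<in>I. c i powr s) = 1"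
  shows "(\<Sum>w\<in>words I n. word_ratio c w powr s) = 1"
proof (induction n)
  case (Suc n)
  have inj: "inj_on (\<lambda>(i, w). i # w) (I \<times> words I n)" by (auto simp: inj_on_def)
  have nonneg: "0 \<le> word_ratio c w" if "w \<in> words I n" for w
    using word_ratio_pos[of I c w] that assms(2) unfolding words_def by force
  have "(\<Sum>w\<in>words I (Suc n). word_ratio c w powr s)
      = (\<Sum>i\<in>I. \<Sum>w\<in>words I n. c i powr s * word_ratio c w powr s)"
    unfolding words_Suc sum.reindex[OF inj] sum.cartesian_product
    by (intro sum.cong refl) (auto simp: powr_mult assms(2) less_imp_le nonneg)
  also have "\<dots> = 1" by (simp add: Suc assms(3) flip: sum_distrib_left)
  finally show ?case .
qed (simp add: words_0)

lemma card_words_ratio_ge_le: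
  assumes "finite I" "\<And>i. i \<in> I \<Longrightarrow> 0 < c i" "(\<Sum>i\<in>I. c i powr s) = 1" "0 \<le> s" "0 < \<rho>"
  shows "real (card {w\<in>words I n. \<rho> \<le> word_ratio c w}) \<le> \<rho> powr -s"
proof -
  let ?W = "{w\<in>words I n. \<rho> \<le> word_ratio c w}"
  have "real (card ?W) * \<rho> powr s = (\<Sum>w\<in>?W. \<rho> powr s)" by simp
  also have "\<dots> \<le> (\<Sum>w\<in>?W. word_ratio c w powr s)"
    by (intro sum_mono powr_mono2) (use assms(4,5) in auto)
  also have "\<dots> \<le> (\<Sum>w\<in>words I n. word_ratio c w powr s)"
    by (intro sum_mono2 finite_words assms(1)) auto
  also have "\<dots> = 1" using sum_words_ratio_powr[OF assms(1-3)] .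
  finally show ?thesis using assms(5) by (simp add: powr_minus field_simps)
qed

lemma inhomogeneous_attractor_subset:
  assumes "F = (\<Union>i\<in>I. S i ` F) \<union> C"
  shows "F \<subseteq> (\<Union>k<n. \<Union>w\<in>words I k. word_map S w ` C) \<union> (\<Union>w\<in>words I n. word_map S w ` F)"
proof (induction n)
  case (Suc n)
  have "(\<Union>w\<in>words I n. word_map S w ` F)
      \<subseteq> (\<Union>w\<in>words I n. word_map S w ` C) \<union> (\<Union>w\<in>words I (Suc n). word_map S w ` F)"
  proof
    fix y assume "y \<in> (\<Union>w\<in>words I n. word_map S w ` F)"
    then obtain w x where w: "w \<in> words I n" and "x \<in> F" and y: "y = word_map S w x" by blast
    then consider "x \<in> C" | i z where "i \<in> I" "z \<in> F" "x = S i z" using assms by blast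
    then show "y \<in> (\<Union>w\<in>words I n. word_map S w ` C) \<union> (\<Union>w\<in>words I (Suc n). word_map S w ` F)"
    proof cases
      case (2 i z)
      then have "w @ [i] \<in> words I (Suc n)" "y = word_map S (w @ [i]) z"
        using w y by (auto simp: words_def word_map_append_single)
      with \<open>z \<in> F\<close> show ?thesis by blast
    qed (use w y in blast)
  qed
  with Suc.IH have "F \<subseteq> (\<Union>k<n. \<Union>w\<in>words I k. word_map S w ` C)
      \<union> ((\<Union>w\<in>words I n. word_map S w ` C) \<union> (\<Union>w\<in>words I (Suc n). word_map S w ` F))"
    by (rule subset_trans[OF _ Un_mono[OF order_refl]])
  then show ?case by (simp add: lessThan_Suc Un_ac)
qed (simp add: words_0)

lemma eventually_at_right_0_lt_1: "eventually (\<lambda>\<delta>::real. 0 < \<delta> \<and> \<delta> < 1) (at_right 0)"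
  unfolding eventually_at_right_field by (intro exI[of _ 1]) auto

lemma upper_box_dim_le_if_eventually_powr:
  assumes "0 \<le> t"
    and bound: "\<And>\<epsilon>. 0 < \<epsilon> \<Longrightarrow>
      eventually (\<lambda>\<delta>. real (covering_number \<delta> X) \<le> \<delta> powr -(t + \<epsilon>)) (at_right 0)"
  shows "upper_box_dim X \<le> ereal t"
proof (rule ereal_le_epsilon2)
  fix \<epsilon> :: real assume "0 < \<epsilon>"
  have "eventually (\<lambda>\<delta>. ereal (ln (real (covering_number \<delta> X)) / (- ln \<delta>)) \<le> ereal (t + \<epsilon>)) (at_right 0)"
    using bound[OF \<open>0 < \<epsilon>\<close>] eventually_at_right_0_lt_1
  proof eventually_elim
    case (elim \<delta>)
    define N where "N = real (covering_number \<delta> X)"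
    have ln_N: "ln N \<le> (t + \<epsilon>) * (- ln \<delta>)"
    proof (cases "N = 0")
      case False
      then have "ln N \<le> ln (\<delta> powr -(t + \<epsilon>))"
        using elim unfolding N_def by (subst ln_le_cancel_iff) auto
      with elim show ?thesis by (simp add: ln_powr algebra_simps)
    qed (use elim \<open>0 \<le> t\<close> \<open>0 < \<epsilon>\<close> in \<open>simp add: mult_nonneg_nonpos\<close>)
    moreover have "0 < - ln \<delta>" using elim by simp
    ultimately have "ln N / (- ln \<delta>) \<le> t + \<epsilon>" by (simp only: pos_divide_le_eq)
    then show ?case unfolding N_def by simp
  qed
  then have "upper_box_dim X \<le> ereal (t + \<epsilon>)"
    unfolding upper_box_dim_def by (rule Limsup_bounded)
  then show "upper_box_dim X \<le> ereal t + ereal \<epsilon>" by simp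
qed

lemma eventually_covering_number_le_powr:
  assumes "upper_box_dim X = 0" "0 < \<epsilon>"
  shows "eventually (\<lambda>\<delta>. real (covering_number \<delta> X) \<le> \<delta> powr -\<epsilon>) (at_right 0)"
proof -
  have "Limsup (at_right 0) (\<lambda>\<delta>. ereal (ln (real (covering_number \<delta> X)) / (- ln \<delta>))) < ereal \<epsilon>"
    using assms unfolding upper_box_dim_def by simp
  then have "eventually (\<lambda>\<delta>. ereal (ln (real (covering_number \<delta> X)) / (- ln \<delta>)) < ereal \<epsilon>) (at_right 0)"
    by (rule Limsup_lessD)
  with eventually_at_right_0_lt_1 show ?thesis
  proof eventually_elim
    case (elim \<delta>)
    define N where "N = real (covering_number \<delta> X)"
    show ?case
    proof (cases "N = 0")
      case False
      have "0 < - ln \<delta>" using elim by simp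
      moreover have "ln N / (- ln \<delta>) < \<epsilon>" using elim unfolding N_def by simp
      ultimately have "ln N < \<epsilon> * (- ln \<delta>)" by (simp only: pos_divide_less_eq)
      also have "\<dots> = ln (\<delta> powr -\<epsilon>)" using elim by (simp add: ln_powr)
      finally have "ln N < ln (\<delta> powr -\<epsilon>)" .
      then show ?thesis using False elim unfolding N_def by (subst (asm) ln_less_cancel_iff) auto
    qed (simp add: N_def)
  qed
qed

lemma exists_power_mult_le:
  fixes q R \<delta> :: real
  assumes "0 < q" "q < 1" "0 < \<delta>" "\<delta> \<le> R"
  obtains n where "q ^ n * R \<le> \<delta>" "real n \<le> ln (R / \<delta>) / ln (1 / q) + 1"
proof
  define x where "x = ln (R / \<delta>) / ln (1 / q)"
  have "0 \<le> x" unfolding x_def using assms by (intro divide_nonneg_pos) auto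
  have "x \<le> real (nat \<lceil>x\<rceil>)" by linarith
  have "q ^ nat \<lceil>x\<rceil> = q powr real (nat \<lceil>x\<rceil>)" using assms(1) by (simp add: powr_realpow)
  also have "\<dots> \<le> q powr x" using assms(1,2) \<open>x \<le> real (nat \<lceil>x\<rceil>)\<close> by (intro powr_mono') auto
  also have "\<dots> = \<delta> / R"
    using assms unfolding x_def by (simp add: powr_def ln_div exp_diff)
  finally show "q ^ nat \<lceil>x\<rceil> * R \<le> \<delta>" using assms by (simp add: le_divide_eq)
  show "real (nat \<lceil>x\<rceil>) \<le> x + 1" using \<open>0 \<le> x\<close> by linarith
qed

lemma one_le_powr_of_nonpos:
  fixes x a :: real
  assumes "0 < x" "x \<le> 1" "a \<le> 0"
  shows "1 \<le> x powr a"
  using powr_mono'[OF assms(3) less_imp_le[OF assms(1)] assms(2)] assms(1) by simp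

text \<open>Choosing the threshold \<open>\<rho> = \<delta> powr \<beta>\<close> makes both terms of the covering bound
  at most \<open>\<delta> powr -t\<close>.\<close>
lemma threshold_bound_le:
  fixes \<delta> \<beta> s t R K M :: real and n k j :: nat
  assumes "0 < \<delta>" "\<delta> < 1" "\<beta> \<le> 1" "0 \<le> s * \<beta>" "s * \<beta> \<le> t" "(1 - \<beta>) * j \<le> t"
    and "0 \<le> M" "0 \<le> R" "0 \<le> K"
  shows "1 + real n * (\<delta> powr \<beta>) powr -s * M + real n ^ k * M * (K * (\<delta> powr \<beta> * R / \<delta> + 1) ^ j)
    \<le> (1 + K * (R + 1) ^ j) * (real n + 1) ^ (k + 1) * (M + 1) * \<delta> powr -t"
proof -
  define E where "E = \<delta> powr -t"
  define P where "P = (real n + 1) ^ (k + 1)"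
  define G where "G = K * (R + 1) ^ j"
  have E: "1 \<le> E" unfolding E_def using assms by (intro one_le_powr_of_nonpos) auto
  have "(real n + 1) ^ 1 \<le> P" "(real n + 1) ^ k \<le> P"
    unfolding P_def by (intro power_increasing; simp)+
  moreover have "real n ^ k \<le> (real n + 1) ^ k" by (intro power_mono) auto
  ultimately have P: "1 \<le> P" "n \<le> P" "n ^ k \<le> P" by auto
  have "(\<delta> powr \<beta>) powr -s = \<delta> powr -(s * \<beta>)" by (simp add: powr_powr mult.commute)
  also have "\<dots> \<le> E" unfolding E_def using assms by (intro powr_mono') auto
  finally have first: "(\<delta> powr \<beta>) powr -s \<le> E" .
  have ratio: "\<delta> powr \<beta> / \<delta> = \<delta> powr (\<beta> - 1)" using assms(1) by (simp add: powr_diff)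
  have "1 \<le> \<delta> powr (\<beta> - 1)" using assms by (intro one_le_powr_of_nonpos) auto
  have "\<delta> powr \<beta> * R / \<delta> + 1 = R * \<delta> powr (\<beta> - 1) + 1" by (simp add: ratio[symmetric])
  also have "\<dots> \<le> (R + 1) * \<delta> powr (\<beta> - 1)"
    using \<open>1 \<le> \<delta> powr (\<beta> - 1)\<close> by (simp add: distrib_right)
  finally have "(\<delta> powr \<beta> * R / \<delta> + 1) ^ j \<le> ((R + 1) * \<delta> powr (\<beta> - 1)) ^ j"
    by (rule power_mono) (use assms in simp)
  also have "\<dots> = (R + 1) ^ j * \<delta> powr (j * (\<beta> - 1))"
    using assms(1) by (simp add: power_mult_distrib powr_power)
  also have "\<dots> \<le> (R + 1) ^ j * E"
    unfolding E_def using assms by (intro mult_left_mono powr_mono') (auto simp: algebra_simps)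
  finally have second: "(\<delta> powr \<beta> * R / \<delta> + 1) ^ j \<le> (R + 1) ^ j * E" .
  have "real n * (\<delta> powr \<beta>) powr -s * M \<le> P * E * M"
    using first P E assms by (intro mult_mono) auto
  moreover have "real n ^ k * M * (K * (\<delta> powr \<beta> * R / \<delta> + 1) ^ j) \<le> P * M * (K * ((R + 1) ^ j * E))"
    using second P assms by (intro mult_mono) auto
  ultimately have "1 + real n * (\<delta> powr \<beta>) powr -s * M + real n ^ k * M * (K * (\<delta> powr \<beta> * R / \<delta> + 1) ^ j)
      \<le> E + P * E * M + P * M * G * E"
    using E unfolding G_def by (simp add: ac_simps)
  also have "\<dots> \<le> P * E + P * E * M + P * M * G * E + G * P * E"
  proof -
    have "E \<le> P * E" using P E by simp
    moreover have "0 \<le> G * P * E" using P E assms unfolding G_def by simp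
    ultimately show ?thesis by simp
  qed
  also have "\<dots> = (1 + G) * P * (M + 1) * E" by (simp add: algebra_simps)
  finally show ?thesis unfolding E_def P_def G_def by simp
qed

locale similarity_ifs_common_fixpoint =
  fixes I :: "'i set" and S :: "'i \<Rightarrow> 'a::euclidean_space \<Rightarrow> 'a" and c :: "'i \<Rightarrow> real" and p :: 'a
  assumes finite_index: "finite I"
    and similarity: "\<And>i. i \<in> I \<Longrightarrow> similarity_with_ratio (c i) (S i)"
    and ratio: "\<And>i. i \<in> I \<Longrightarrow> 0 < c i \<and> c i < 1"
    and common_fixpoint: "\<And>i. i \<in> I \<Longrightarrow> S i p = p"
begin

lemma ratio_bound:
  obtains q where "0 < q" "q < 1" "\<And>i. i \<in> I \<Longrightarrow> c i \<le> q"
proof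
  let ?q = "Max (insert (1/2) (c ` I))"
  show "0 < ?q" "?q < 1" using finite_index ratio by (auto simp: Max_gr_iff)
  show "c i \<le> ?q" if "i \<in> I" for i using finite_index that by simp
qed

lemma word_ratio_le_1: "set w \<subseteq> I \<Longrightarrow> word_ratio c w \<le> 1"
  using word_ratio_le_power[of I c 1 w] ratio by fastforce

lemma dist_word_map_fixpoint:
  assumes "set w \<subseteq> I"
  shows "dist (word_map S w x) p = word_ratio c w * dist x p"
  using dist_word_map[where S = S and c = c and x = x and y = p, OF similarity assms]
    word_map_fixpoint[where S = S and p = p, OF common_fixpoint assms]
  by simp

lemma coverable_word_image:
  assumes "coverable \<delta> X B" "set w \<subseteq> I"
  shows "coverable \<delta> (word_map S w ` X) B"
proof (rule coverable_image[OF assms(1)])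
  fix x y
  have "0 \<le> word_ratio c w" using word_ratio_pos[of I c w] ratio assms(2) by force
  then show "dist (word_map S w x) (word_map S w y) \<le> dist x y"
    using dist_word_map[OF similarity assms(2)] word_ratio_le_1[OF assms(2)]
    by (simp add: mult_left_le_one_le)
qed

lemma coverable_large_word_images:
  assumes "0 \<le> s" "(\<Sum>i\<in>I. c i powr s) = 1" "0 < \<rho>" "coverable \<delta> C M"
  shows "coverable \<delta> (\<Union>w\<in>{w\<in>(\<Union>k<n. words I k). \<rho> \<le> word_ratio c w}. word_map S w ` C)
    (n * \<rho> powr -s * M)"
proof -
  let ?W = "{w\<in>(\<Union>k<n. words I k). \<rho> \<le> word_ratio c w}"
  have finite: "finite ?W" using finite_words[OF finite_index] by auto
  have "?W = (\<Union>k<n. {w\<in>words I k. \<rho> \<le> word_ratio c w})" by auto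
  then have "real (card ?W) \<le> (\<Sum>k<n. real (card {w\<in>words I k. \<rho> \<le> word_ratio c w}))"
    using card_UN_le[of "{..<n}" "\<lambda>k. {w\<in>words I k. \<rho> \<le> word_ratio c w}"]
    by (simp flip: of_nat_sum)
  also have "\<dots> \<le> (\<Sum>k<n. \<rho> powr -s)"
    using card_words_ratio_ge_le[OF finite_index _ assms(2,1,3)] ratio by (intro sum_mono) auto
  finally have card_W: "real (card ?W) \<le> n * \<rho> powr -s" by simp
  have "coverable \<delta> (\<Union>w\<in>?W. word_map S w ` C) (\<Sum>w\<in>?W. M)"
    using finite assms(4) by (intro coverable_UN coverable_word_image) (auto simp: words_def)
  moreover have "(\<Sum>w\<in>?W. M) \<le> n * \<rho> powr -s * M"
    using card_W coverable_nonneg[OF assms(4)] by (simp add: mult_right_mono)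
  ultimately show ?thesis by (rule coverable_mono[OF _ order_refl])
qed

lemma coverable_small_word_images:
  assumes "0 < \<delta>" "0 \<le> \<rho>" "0 \<le> R" "C \<subseteq> cball p R" "coverable \<delta> C M"
  shows "coverable \<delta> (\<Union>w\<in>{w\<in>(\<Union>k<n. words I k). word_ratio c w < \<rho>}. word_map S w ` C)
    (real n ^ card I * M * (3 * DIM('a) * 2 ^ DIM('a) * (\<rho> * R / \<delta> + 1) ^ (DIM('a) - 1)))"
proof -
  obtain A where A: "finite A" "real (card A) \<le> M" "C \<subseteq> (\<Union>a\<in>A. cball a \<delta>)"
    using assms(5) unfolding coverable_def by blast
  define V where "V = word_ratio c ` (\<Union>k<n. words I k)"
  define K where "K = 3 * DIM('a) * 2 ^ DIM('a) * (\<rho> * R / \<delta> + 1) ^ (DIM('a) - 1)"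
  have shells: "(\<Union>w\<in>{w\<in>(\<Union>k<n. words I k). word_ratio c w < \<rho>}. word_map S w ` C)
      \<subseteq> (\<Union>v\<in>V. \<Union>a\<in>A. shell p (v * dist a p) \<delta> (\<rho> * R))"
  proof safe
    fix w k x assume "k < n" "w \<in> words I k" "word_ratio c w < \<rho>" "x \<in> C"
    then have w: "set w \<subseteq> I" "word_ratio c w \<in> V" "word_ratio c w < \<rho>"
      unfolding V_def words_def by auto
    obtain a where a: "a \<in> A" "dist a x \<le> \<delta>" using A(3) \<open>x \<in> C\<close> by auto
    have r: "0 \<le> word_ratio c w" "word_ratio c w \<le> 1"
      using word_ratio_pos[of I c w] ratio w(1) word_ratio_le_1 by force+
    have "\<bar>dist (word_map S w x) p - word_ratio c w * dist a p\<bar>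
        = word_ratio c w * \<bar>dist x p - dist a p\<bar>"
      using r by (simp add: dist_word_map_fixpoint[OF w(1)] abs_mult flip: right_diff_distrib)
    also have "\<dots> \<le> 1 * \<delta>"
      using r a(2) abs_dist_diff_le[of x p a] by (intro mult_mono) (auto simp: dist_commute)
    finally have "\<bar>dist (word_map S w x) p - word_ratio c w * dist a p\<bar> \<le> \<delta>" by simp
    moreover have "dist (word_map S w x) p \<le> \<rho> * R"
      using w(3) r assms(4) \<open>x \<in> C\<close> unfolding dist_word_map_fixpoint[OF w(1)]
      by (intro mult_mono) (auto simp: dist_commute)
    ultimately show "word_map S w x \<in> (\<Union>v\<in>V. \<Union>a\<in>A. shell p (v * dist a p) \<delta> (\<rho> * R))"
      using w(2) a(1) unfolding shell_def by blast
  qed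
  have cover: "coverable \<delta> (\<Union>v\<in>V. \<Union>a\<in>A. shell p (v * dist a p) \<delta> (\<rho> * R)) (\<Sum>v\<in>V. \<Sum>a\<in>A. K)"
    unfolding K_def using finite_index A(1) assms(1-3)
    by (intro coverable_UN coverable_shell) (auto simp: V_def finite_words)
  have "(\<Sum>v\<in>V. \<Sum>a\<in>A. K) \<le> real n ^ card I * M * K"
  proof -
    have "real (card V) \<le> real n ^ card I"
      unfolding V_def using card_word_ratios_le[OF finite_index] by (simp flip: of_nat_power)
    moreover have "0 \<le> K" unfolding K_def using assms(1-3) by simp
    ultimately have "real (card V) * (real (card A) * K) \<le> real n ^ card I * (M * K)"
      using A(2) by (intro mult_mono mult_right_mono) auto
    then show ?thesis by (simp add: mult.assoc)
  qed
  with cover shells show ?thesis unfolding K_def by (rule coverable_mono)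
qed

lemma long_word_images_subset_cball:
  assumes "0 < q" "\<And>i. i \<in> I \<Longrightarrow> c i \<le> q" "X \<subseteq> cball p R" "q ^ n * R \<le> \<delta>"
  shows "(\<Union>w\<in>words I n. word_map S w ` X) \<subseteq> cball p \<delta>"
proof safe
  fix w x assume "w \<in> words I n" "x \<in> X"
  then have w: "set w \<subseteq> I" "length w = n" and "dist x p \<le> R"
    using assms(3) unfolding words_def by (auto simp: dist_commute)
  have "word_ratio c w \<le> q ^ n" using word_ratio_le_power[of I c q w] ratio assms(2) w by auto
  with \<open>dist x p \<le> R\<close> assms(1) have "word_ratio c w * dist x p \<le> q ^ n * R"
    by (intro mult_mono) auto
  with assms(4) have "dist (word_map S w x) p \<le> \<delta>" by (simp add: dist_word_map_fixpoint[OF w(1)])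
  then show "word_map S w x \<in> cball p \<delta>" by (simp add: dist_commute)
qed

lemma coverable_attractor:
  assumes "0 \<le> s" "(\<Sum>i\<in>I. c i powr s) = 1" and F: "F = (\<Union>i\<in>I. S i ` F) \<union> C"
    and "F \<subseteq> cball p R" "0 \<le> R" "0 < q" "\<And>i. i \<in> I \<Longrightarrow> c i \<le> q" "q ^ n * R \<le> \<delta>"
    and "0 < \<delta>" "0 < \<rho>" "coverable \<delta> C M"
  shows "coverable \<delta> F (1 + n * \<rho> powr -s * M
    + real n ^ card I * M * (3 * DIM('a) * 2 ^ DIM('a) * (\<rho> * R / \<delta> + 1) ^ (DIM('a) - 1)))"
proof -
  have "C \<subseteq> cball p R" using F assms(4) by blast
  have decomposition: "F \<subseteq> (\<Union>w\<in>{w\<in>(\<Union>k<n. words I k). \<rho> \<le> word_ratio c w}. word_map S w ` C)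
      \<union> (\<Union>w\<in>{w\<in>(\<Union>k<n. words I k). word_ratio c w < \<rho>}. word_map S w ` C)
      \<union> cball p \<delta>"
    using inhomogeneous_attractor_subset[OF F, of n] long_word_images_subset_cball[OF assms(6,7,4,8)]
    by (force simp: not_le)
  have "coverable \<delta> ((\<Union>w\<in>{w\<in>(\<Union>k<n. words I k). \<rho> \<le> word_ratio c w}. word_map S w ` C)
      \<union> (\<Union>w\<in>{w\<in>(\<Union>k<n. words I k). word_ratio c w < \<rho>}. word_map S w ` C)
      \<union> cball p \<delta>) (n * \<rho> powr -s * M
        + real n ^ card I * M * (3 * DIM('a) * 2 ^ DIM('a) * (\<rho> * R / \<delta> + 1) ^ (DIM('a) - 1)) + 1)"
    using assms(1,2,5,9-11) \<open>C \<subseteq> cball p R\<close>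
    by (intro coverable_Un coverable_large_word_images coverable_small_word_images coverable_cball) auto
  from coverable_mono[OF this decomposition] show ?thesis by simp
qed

lemma covering_number_attractor_le:
  fixes R :: real
  assumes "0 \<le> s" "(\<Sum>i\<in>I. c i powr s) = 1" "compact C" "F = (\<Union>i\<in>I. S i ` F) \<union> C"
    and "F \<subseteq> cball p R" "0 \<le> R" "0 < q" "\<And>i. i \<in> I \<Longrightarrow> c i \<le> q" "q ^ n * R \<le> \<delta>"
    and "0 < \<delta>" "\<delta> < 1" "0 \<le> \<beta>" "\<beta> \<le> 1" "s * \<beta> \<le> t" "(1 - \<beta>) * real (DIM('a) - 1) \<le> t"
  shows "real (covering_number \<delta> F) \<le> (1 + 3 * DIM('a) * 2 ^ DIM('a) * (R + 1) ^ (DIM('a) - 1))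
    * (real n + 1) ^ (card I + 1) * (real (covering_number \<delta> C) + 1) * \<delta> powr -t"
proof -
  let ?M = "real (covering_number \<delta> C)"
  have "real (covering_number \<delta> F) \<le> 1 + n * (\<delta> powr \<beta>) powr -s * ?M
    + real n ^ card I * ?M * (3 * DIM('a) * 2 ^ DIM('a) * (\<delta> powr \<beta> * R / \<delta> + 1) ^ (DIM('a) - 1))"
    using coverable_attractor[where \<rho> = "\<delta> powr \<beta>",
        OF assms(1,2,4-10) _ coverable_covering_number[OF assms(3,10)]] assms(10)
    by (intro covering_number_le) simp
  also have "\<dots> \<le> (1 + 3 * DIM('a) * 2 ^ DIM('a) * (R + 1) ^ (DIM('a) - 1))
    * (real n + 1) ^ (card I + 1) * (?M + 1) * \<delta> powr -t"
    by (rule threshold_bound_le) (use assms(1,6,10-15) in auto)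
  finally show ?thesis .
qed

lemma upper_box_dim_attractor_le:
  assumes "0 \<le> s" "(\<Sum>i\<in>I. c i powr s) = 1" "compact C" "upper_box_dim C = 0"
    and "bounded F" "F = (\<Union>i\<in>I. S i ` F) \<union> C"
    and "0 \<le> \<beta>" "\<beta> \<le> 1" "s * \<beta> \<le> t" "(1 - \<beta>) * real (DIM('a) - 1) \<le> t"
  shows "upper_box_dim F \<le> ereal t"
proof (rule upper_box_dim_le_if_eventually_powr)
  show "0 \<le> t" using assms(1,7,9) by (meson mult_nonneg_nonneg order_trans)
  fix \<epsilon> :: real assume "0 < \<epsilon>"
  obtain q where q: "0 < q" "q < 1" "\<And>i. i \<in> I \<Longrightarrow> c i \<le> q"
    using ratio_bound by auto
  obtain r where "0 < r" "F \<subseteq> ball p r" using bounded_subset_ballD[OF assms(5)] by blast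
  define R where "R = max 1 r"
  have R: "1 \<le> R" "F \<subseteq> cball p R" using \<open>F \<subseteq> ball p r\<close> unfolding R_def by auto
  define G where "G = 1 + 3 * DIM('a) * 2 ^ DIM('a) * (R + 1) ^ (DIM('a) - 1)"
  have "eventually (\<lambda>\<delta>. 2 * G * (ln (R / \<delta>) / ln (1 / q) + 2) ^ (card I + 1) \<le> \<delta> powr -(\<epsilon>/2)) (at_right 0)"
    using q(1,2) R(1) \<open>0 < \<epsilon>\<close> by real_asymp
  moreover have "eventually (\<lambda>\<delta>. real (covering_number \<delta> C) \<le> \<delta> powr -(\<epsilon>/2)) (at_right 0)"
    using eventually_covering_number_le_powr[OF assms(4)] \<open>0 < \<epsilon>\<close> by simp
  ultimately show "eventually (\<lambda>\<delta>. real (covering_number \<delta> F) \<le> \<delta> powr -(t + \<epsilon>)) (at_right 0)"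
    using eventually_at_right_0_lt_1
  proof eventually_elim
    case (elim \<delta>)
    then have \<delta>: "0 < \<delta>" "\<delta> < 1" "\<delta> \<le> R" using R(1) by auto
    obtain n where n: "q ^ n * R \<le> \<delta>" "real n \<le> ln (R / \<delta>) / ln (1 / q) + 1"
      using exists_power_mult_le[OF q(1,2) \<delta>(1,3)] .
    have "1 \<le> \<delta> powr -(\<epsilon>/2)" using \<delta> \<open>0 < \<epsilon>\<close> by (intro one_le_powr_of_nonpos) auto
    have "0 \<le> ln (R / \<delta>) / ln (1 / q)" using \<delta> q by (intro divide_nonneg_pos) auto
    have "0 \<le> G" unfolding G_def using R(1) by simp
    have "real (covering_number \<delta> F)
        \<le> G * (real n + 1) ^ (card I + 1) * (real (covering_number \<delta> C) + 1) * \<delta> powr -t"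
      unfolding G_def using assms(1-3,6-10) R q \<delta> n(1) by (intro covering_number_attractor_le) auto
    also have "\<dots> \<le> G * (ln (R / \<delta>) / ln (1 / q) + 2) ^ (card I + 1) * (2 * \<delta> powr -(\<epsilon>/2)) * \<delta> powr -t"
      using n(2) elim(2) \<open>1 \<le> \<delta> powr -(\<epsilon>/2)\<close> \<open>0 \<le> ln (R / \<delta>) / ln (1 / q)\<close> \<open>0 \<le> G\<close>
      by (intro mult_mono power_mono) auto
    also have "\<dots> = 2 * G * (ln (R / \<delta>) / ln (1 / q) + 2) ^ (card I + 1) * \<delta> powr -(\<epsilon>/2) * \<delta> powr -t"
      by (simp add: ac_simps)
    also have "\<dots> \<le> \<delta> powr -(\<epsilon>/2) * \<delta> powr -(\<epsilon>/2) * \<delta> powr -t"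
      using elim(1) by (intro mult_right_mono) auto
    also have "\<dots> = \<delta> powr -(t + \<epsilon>)" by (simp add: algebra_simps flip: powr_add)
    finally show ?case .
  qed
qed

end

theorem corollary4p13:
  fixes S :: "'i \<Rightarrow> 'a::euclidean_space \<Rightarrow> 'a"
    and c :: "'i \<Rightarrow> real"
    and I :: "'i set"
    and C F :: "'a set"
    and s :: real
  assumes dim: "DIM('a) \<ge> 2"
    and finI: "finite I" and neI: "I \<noteq> {}"
    and sim: "\<And>i. i \<in> I \<Longrightarrow> similarity_with_ratio (c i) (S i)"
    and ratio: "\<And>i. i \<in> I \<Longrightarrow> 0 < c i \<and> c i < 1"
    and fix_common: "\<exists>p. \<forall>i\<in>I. S i p = p"
    and s_nonneg: "s \<ge> 0"
    and s_def: "(\<Sum>i\<in>I. c i powr s) = 1"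
    and C_compact: "compact C" and C_ne: "C \<noteq> {}"
    and C_dim: "upper_box_dim C = 0"
    and F_compact: "compact F" and F_ne: "F \<noteq> {}"
    and F_eq: "F = (\<Union>i\<in>I. S i ` F) \<union> C"
  shows "upper_box_dim F \<le> ereal (s / (1 + s / (real DIM('a) - 1)))
         \<and> s / (1 + s / (real DIM('a) - 1)) < real DIM('a) - 1"
proof -
  obtain p where "\<forall>i\<in>I. S i p = p" using fix_common by blast
  then interpret similarity_ifs_common_fixpoint I S c p
    by unfold_locales (use finI sim ratio in auto)
  define D where "D = real DIM('a) - 1"
  define \<beta> where "\<beta> = D / (s + D)"
  have "1 \<le> D" "real (DIM('a) - 1) = D" unfolding D_def using dim by (auto simp: of_nat_diff)
  then have exponent: "s / (1 + s / D) = s * \<beta>" "s / (1 + s / D) = (1 - \<beta>) * D" "s / (1 + s / D) < D"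
    using s_nonneg unfolding \<beta>_def by (auto simp: field_simps)
  have "upper_box_dim F \<le> ereal (s / (1 + s / D))"
    by (rule upper_box_dim_attractor_le[OF s_nonneg s_def C_compact C_dim
        compact_imp_bounded[OF F_compact] F_eq, of \<beta>])
      (use \<open>1 \<le> D\<close> \<open>real (DIM('a) - 1) = D\<close> s_nonneg exponent(1,2) in \<open>auto simp: \<beta>_def\<close>)
  with exponent(3) show ?thesis unfolding D_def by simp
qed

end
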